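(* For any $\sigma\in S_n$ and $I,J\in\mathcal I_\lambda$, $\widetilde W_{\sigma,I}(z_J,z,h)=0$ unless $J\le_\sigma I$.
   Context: Fix $N,n$, $\lambda\in\mathbb Z_{\ge0}^N$ with $\sum\lambda_k=n$; $\lambda^{(k)}=\lambda_1+\dots+\lambda_k$, $\lambda^{\{1\}}=\lambda^{(1)}+\dots+\lambda^{(N-1)}$. $\mathcal I_\lambda$ = ordered partitions $I=(I_1,\dots,I_N)$ of $\{1,\dots,n\}$ with $|I_k|=\lambda_k$; write $I_1\cup\dots\cup I_k=\{i^{(k)}_1<\dots<i^{(k)}_{\lambda^{(k)}}\}$; $\sigma(I)=(\sigma(I_1),\dots,\sigma(I_N))$. Weight functions: variables $t^{(k)}_a$ ($1\le k\le N-1$, $1\le a\le\lambda^{(k)}$), $z_1,\dots,z_n$, $h$; $t^{(N)}_a=z_a$. $U_I=\prod_{k=1}^{N-1}\prod_{a=1}^{\lambda^{(k)}}\Big(\prod_{c:\,i^{(k+1)}_c<i^{(k)}_a}(1-ht^{(k+1)}_c/t^{(k)}_a)\prod_{c:\,i^{(k+1)}_c>i^{(k)}_a}(1-t^{(k+1)}_c/t^{(k)}_a)\prod_{b=a+1}^{\lambda^{(k)}}\frac{1-ht^{(k)}_b/t^{(k)}_a}{1-t^{(k)}_b/t^{(k)}_a}\Big)$ ($c$ ranges in $1..\lambda^{(k+1)}$), $W_I=(1-h)^{\lambda^{\{1\}}}\mathrm{Sym}_{t^{(1)}}\cdots\mathrm{Sym}_{t^{(N-1)}}U_I$ with $\mathrm{Sym}_{t^{(k)}}$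 the sum over all permutations of $t^{(k)}_1,\dots,t^{(k)}_{\lambda^{(k)}}$. $W_{\sigma,I}(t,z,h)=W_{\sigma^{-1}(I)}(t,z_{\sigma(1)},\dots,z_{\sigma(n)},h)$. $E(t,h)=\prod_{k=1}^{N-1}\prod_{a,b=1}^{\lambda^{(k)}}(1-ht^{(k)}_b/t^{(k)}_a)$, $\widetilde W_{\sigma,I}=W_{\sigma,I}/E$. $f(z_J,z,h)$: substitution $t^{(k)}_a=z_{j^{(k)}_a}$, $J_1\cup\dots\cup J_k=\{j^{(k)}_1<\dots\}$ (for $\widetilde W$, this is the Laurent polynomial $W_{\sigma,I}(z_J,z,h)/E(z_J,h)$). Order $\le_\sigma$: with $\sigma^{-1}(I_1\cup\dots\cup I_k)=\{a^k_1<\dots\}$, $\sigma^{-1}(J_1\cup\dots\cup J_k)=\{b^k_1<\dots\}$, $J\le_\sigma I$ iff $b^k_i\le a^k_i$ for all $k=1,\dots,N-1$ and all $i$. *)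

theory Defs
  imports Complex_Main "HOL-Combinatorics.Permutations"
begin

definition lsum :: "(nat \<Rightarrow> nat) \<Rightarrow> nat \<Rightarrow> nat" where
  "lsum lam k = (\<Sum>m=1..k. lam m)"

definition lsum1 :: "nat \<Rightarrow> (nat \<Rightarrow> nat) \<Rightarrow> nat" where
  "lsum1 N lam = (\<Sum>k=1..N-1. lsum lam k)"

definition cumset :: "(nat \<Rightarrow> nat set) \<Rightarrow> nat \<Rightarrow> nat set" where
  "cumset I k = (\<Union>m\<in>{1..k}. I m)"

text \<open>The a-th smallest element (1-based) of a finite set of naturals.\<close>
definition elt :: "nat set \<Rightarrow> nat \<Rightarrow> nat" where
  "elt S a = sorted_list_of_set S ! (a - 1)"

text \<open>Ordered partitions I = (I_1,...,I_N) of {1..n} with |I_k| = lambda_k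
  (components outside 1..N are fixed to be empty).\<close>
definition ordered_partitions :: "nat \<Rightarrow> nat \<Rightarrow> (nat \<Rightarrow> nat) \<Rightarrow> (nat \<Rightarrow> nat set) set" where
  "ordered_partitions N n lam = {I.
     (\<forall>k\<in>{1..N}. card (I k) = lam k) \<and>
     (\<forall>k\<in>{1..N}. \<forall>m\<in>{1..N}. k \<noteq> m \<longrightarrow> I k \<inter> I m = {}) \<and>
     (\<Union>k\<in>{1..N}. I k) = {1..n} \<and>
     (\<forall>k. k \<notin> {1..N} \<longrightarrow> I k = {})}"

text \<open>The function U_I; t k a stands for t^(k)_a (1 \<le> k \<le> N-1), and t^(N)_c = z_c.\<close>
definition U_fun :: "nat \<Rightarrow> (nat \<Rightarrow> nat) \<Rightarrow> (nat \<Rightarrow> nat set) \<Rightarrow> (nat \<Rightarrow> nat \<Rightarrow> complex)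
    \<Rightarrow> (nat \<Rightarrow> complex) \<Rightarrow> complex \<Rightarrow> complex" where
  "U_fun N lam I t z h =
    (\<Prod>k\<in>{1..N-1}. \<Prod>a\<in>{1..lsum lam k}.
       (\<Prod>c\<in>{1..lsum lam (Suc k)}.
          (let ic = elt (cumset I (Suc k)) c;
               ia = elt (cumset I k) a;
               tc = (if Suc k = N then z c else t (Suc k) c)
           in if ic < ia then 1 - h * tc / t k a
              else if ia < ic then 1 - tc / t k a
              else 1))
       * (\<Prod>b\<in>{a+1..lsum lam k}. (1 - h * t k b / t k a) / (1 - t k b / t k a)))"

definition perm_tuples :: "nat \<Rightarrow> (nat \<Rightarrow> nat) \<Rightarrow> (nat \<Rightarrow> nat \<Rightarrow> nat) set" where
  "perm_tuples N lam = {p. \<forall>k. (k \<in> {1..N-1} \<longrightarrow> p k permutes {1..lsum lam k}) \<and>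
                             (k \<notin> {1..N-1} \<longrightarrow> p k = id)}"

text \<open>W_I = (1-h)^{lambda^{1}} Sym_{t^(1)} ... Sym_{t^(N-1)} U_I.\<close>
definition W_fun :: "nat \<Rightarrow> (nat \<Rightarrow> nat) \<Rightarrow> (nat \<Rightarrow> nat set) \<Rightarrow> (nat \<Rightarrow> nat \<Rightarrow> complex)
    \<Rightarrow> (nat \<Rightarrow> complex) \<Rightarrow> complex \<Rightarrow> complex" where
  "W_fun N lam I t z h = (1 - h) ^ lsum1 N lam *
     (\<Sum>p\<in>perm_tuples N lam. U_fun N lam I (\<lambda>k a. t k (p k a)) z h)"

definition W_sigma :: "nat \<Rightarrow> (nat \<Rightarrow> nat) \<Rightarrow> (nat \<Rightarrow> nat) \<Rightarrow> (nat \<Rightarrow> nat set)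
    \<Rightarrow> (nat \<Rightarrow> nat \<Rightarrow> complex) \<Rightarrow> (nat \<Rightarrow> complex) \<Rightarrow> complex \<Rightarrow> complex" where
  "W_sigma N lam \<sigma> I t z h = W_fun N lam (\<lambda>k. inv \<sigma> ` I k) t (\<lambda>a. z (\<sigma> a)) h"

definition E_fun :: "nat \<Rightarrow> (nat \<Rightarrow> nat) \<Rightarrow> (nat \<Rightarrow> nat \<Rightarrow> complex) \<Rightarrow> complex \<Rightarrow> complex" where
  "E_fun N lam t h = (\<Prod>k\<in>{1..N-1}. \<Prod>a\<in>{1..lsum lam k}. \<Prod>b\<in>{1..lsum lam k}.
       (1 - h * t k b / t k a))"

definition W_tilde :: "nat \<Rightarrow> (nat \<Rightarrow> nat) \<Rightarrow> (nat \<Rightarrow> nat) \<Rightarrow> (nat \<Rightarrow> nat set)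
    \<Rightarrow> (nat \<Rightarrow> nat \<Rightarrow> complex) \<Rightarrow> (nat \<Rightarrow> complex) \<Rightarrow> complex \<Rightarrow> complex" where
  "W_tilde N lam \<sigma> I t z h = W_sigma N lam \<sigma> I t z h / E_fun N lam t h"

text \<open>The point z_J: t^(k)_a = z_{j^(k)_a}.\<close>
definition z_at :: "(nat \<Rightarrow> nat set) \<Rightarrow> (nat \<Rightarrow> complex) \<Rightarrow> nat \<Rightarrow> nat \<Rightarrow> complex" where
  "z_at J z = (\<lambda>k a. z (elt (cumset J k) a))"

definition leq_sigma :: "nat \<Rightarrow> (nat \<Rightarrow> nat) \<Rightarrow> (nat \<Rightarrow> nat set) \<Rightarrow> (nat \<Rightarrow> nat set) \<Rightarrow> bool" where
  "leq_sigma N \<sigma> J I = (\<forall>k\<in>{1..N-1}. \<forall>i\<in>{1..card (cumset I k)}.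
      elt (inv \<sigma> ` cumset J k) i \<le> elt (inv \<sigma> ` cumset I k) i)"

end

theory Submission
  imports Defs
begin

text \<open>
  Every summand of the symmetrization vanishes at t = z_J unless J \<le>_\<sigma> I.
  In a summand, with t^(k) permuted by p_k, let x(k,a) be the index with
  t^(k)_{p_k(a)} = z_x(k,a) (at level N, x(N,a) = \<sigma>(a)). As J_1 \<union> ... \<union> J_k grows
  with k, x(k,a) = x(k+1,c) for some c; if the position of c in \<sigma>^-1(I_1 \<union> ... \<union> I_(k+1))
  exceeded that of a in \<sigma>^-1(I_1 \<union> ... \<union> I_k), the factor 1 - t^(k+1)_c / t^(k)_a
  = 1 - z_x / z_x would vanish. Descending from level N, where positions are the
  identity, a non-zero summand thus enumerates \<sigma>^-1(J_1 \<union> ... \<union> J_k) by a sequence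
  bounded termwise by the increasing enumeration of \<sigma>^-1(I_1 \<union> ... \<union> I_k); sorting the
  sequence keeps the bound, and that is J \<le>_\<sigma> I.
\<close>

lemma elt_mem: "finite S \<Longrightarrow> a \<in> {1..card S} \<Longrightarrow> elt S a \<in> S"
  unfolding elt_def by (metis atLeastAtMost_iff diff_less less_le_trans
      nth_mem length_sorted_list_of_set set_sorted_list_of_set zero_less_one)

lemma elt_atLeastAtMost: "c \<in> {1..n} \<Longrightarrow> elt {1..n} c = c"
proof -
  assume c: "c \<in> {1..n}"
  have "sorted_list_of_set {1..n} = [1..<Suc n]"
    by (simp add: atLeastLessThanSuc_atLeastAtMost[symmetric])
  then have "elt {1..n} c = [1..<Suc n] ! (c - 1)" by (simp only: elt_def)
  also have "\<dots> = c" using c by (subst nth_upt) auto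
  finally show ?thesis .
qed

lemma elt_mono: "finite S \<Longrightarrow> 1 \<le> a \<Longrightarrow> a \<le> b \<Longrightarrow> b \<le> card S \<Longrightarrow> elt S a \<le> elt S b"
  unfolding elt_def by (intro sorted_nth_mono) auto

lemma elt_image: "finite S \<Longrightarrow> elt S ` {1..card S} = S"
proof
  assume fin: "finite S"
  show "elt S ` {1..card S} \<subseteq> S" using elt_mem[OF fin] by blast
  show "S \<subseteq> elt S ` {1..card S}"
  proof
    fix x assume "x \<in> S"
    then have "x \<in> set (sorted_list_of_set S)" using fin by simp
    then obtain j where j: "j < card S" "sorted_list_of_set S ! j = x"
      by (metis in_set_conv_nth length_sorted_list_of_set)
    then show "x \<in> elt S ` {1..card S}"
      by (intro image_eqI[of _ _ "Suc j"]) (auto simp: elt_def)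
  qed
qed

lemma elt_le_if_card_le:
  assumes fin: "finite A" and i: "1 \<le> i" and card: "i \<le> card {x\<in>A. x \<le> v}"
  shows "elt A i \<le> v"
proof (rule ccontr)
  assume gt: "\<not> elt A i \<le> v"
  have "{x\<in>A. x \<le> v} \<subseteq> elt A ` {1..<i}"
  proof
    fix x assume x: "x \<in> {x\<in>A. x \<le> v}"
    then obtain j where j: "j \<in> {1..card A}" "x = elt A j"
      using elt_image[OF fin] by (metis (no_types, lifting) imageE mem_Collect_eq)
    have "j < i"
      using elt_mono[OF fin, of i j] j x gt by (metis atLeastAtMost_iff i le_trans mem_Collect_eq not_le)
    then show "x \<in> elt A ` {1..<i}" using j by auto
  qed
  then have "card {x\<in>A. x \<le> v} \<le> i - 1"
    by (metis card_atLeastLessThan card_image_le card_mono finite_atLeastLessThan finite_imageI le_trans)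
  then show False using card i by linarith
qed

lemma elt_le_elt_if_dominated:
  assumes fin: "finite A" "finite B" and card: "card A = m" "card B = m"
    and onto: "f ` {1..m} = A" and dom: "\<And>a. a \<in> {1..m} \<Longrightarrow> f a \<le> elt B a"
    and i: "i \<in> {1..m}"
  shows "elt A i \<le> elt B i"
proof (rule elt_le_if_card_le[OF fin(1)])
  have inj: "inj_on f {1..m}" using onto card by (intro eq_card_imp_inj_on) auto
  have "f ` {1..i} \<subseteq> {x\<in>A. x \<le> elt B i}"
  proof
    fix x assume "x \<in> f ` {1..i}"
    then obtain a where a: "a \<in> {1..i}" "x = f a" by auto
    have "f a \<le> elt B a" using dom a i by auto
    also have "\<dots> \<le> elt B i" using a i card fin by (intro elt_mono) auto
    finally show "x \<in> {x\<in>A. x \<le> elt B i}" using a onto i by auto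
  qed
  moreover have "card (f ` {1..i}) = i"
    using inj i by (subst card_image) (auto intro: inj_on_subset)
  ultimately show "i \<le> card {x\<in>A. x \<le> elt B i}"
    using fin(1) by (metis (no_types, lifting) card_mono finite_subset mem_Collect_eq subsetI)
qed (use i in auto)

lemma le_by_downward_induction:
  fixes f g :: "nat \<Rightarrow> 'a \<Rightarrow> 'b::order"
  assumes top: "\<And>a. a \<in> A N \<Longrightarrow> f N a \<le> g N a"
    and descend: "\<And>k a. 1 \<le> k \<Longrightarrow> k < N \<Longrightarrow> a \<in> A k \<Longrightarrow>
                 \<exists>c\<in>A (Suc k). f (Suc k) c = f k a \<and> g (Suc k) c \<le> g k a"
    and k: "1 \<le> k" "k \<le> N" and a: "a \<in> A k"
  shows "f k a \<le> g k a"
proof -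
  have "\<forall>a\<in>A k. f k a \<le> g k a"
    using k(2)
  proof (induction k rule: inc_induct)
    case base
    then show ?case using top by blast
  next
    case (step j)
    show ?case
    proof
      fix a assume "a \<in> A j"
      then obtain c where c: "c \<in> A (Suc j)" "f (Suc j) c = f j a" "g (Suc j) c \<le> g j a"
        using descend[of j a] step.hyps k(1) by auto
      then show "f j a \<le> g j a" using step.IH order_trans by metis
    qed
  qed
  then show ?thesis using a by blast
qed

lemma cumset_mono: "cumset X k \<subseteq> cumset X (Suc k)"
  unfolding cumset_def by (rule UN_mono) auto

lemma cumset_image: "cumset (\<lambda>k. f ` X k) k = f ` cumset X k"
  unfolding cumset_def by (rule image_UN[symmetric])

lemma cumset_subset_ordered_partitions:
  "X \<in> ordered_partitions N n lam \<Longrightarrow> cumset X k \<subseteq> {1..n}"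
  unfolding ordered_partitions_def cumset_def by blast

lemma finite_cumset_ordered_partitions:
  "X \<in> ordered_partitions N n lam \<Longrightarrow> finite (cumset X k)"
  by (rule finite_subset[OF cumset_subset_ordered_partitions]) simp_all

lemma cumset_top_ordered_partitions:
  "X \<in> ordered_partitions N n lam \<Longrightarrow> cumset X N = {1..n}"
  unfolding ordered_partitions_def cumset_def by blast

lemma card_cumset_ordered_partitions:
  assumes X: "X \<in> ordered_partitions N n lam" and k: "k \<le> N"
  shows "card (cumset X k) = lsum lam k"
proof -
  have "card (cumset X k) = (\<Sum>m\<in>{1..k}. card (X m))"
    unfolding cumset_def
  proof (rule card_UN_disjoint)
    show "\<forall>i\<in>{1..k}. finite (X i)"
      using finite_cumset_ordered_partitions[OF X, of k] by (auto simp: cumset_def)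
    show "\<forall>i\<in>{1..k}. \<forall>j\<in>{1..k}. i \<noteq> j \<longrightarrow> X i \<inter> X j = {}"
      using X k by (auto simp: ordered_partitions_def)
  qed simp
  also have "\<dots> = lsum lam k"
    using X k by (auto simp: ordered_partitions_def lsum_def intro: sum.cong)
  finally show ?thesis .
qed

lemma U_fun_nonzero_imp_ne:
  assumes U: "U_fun N lam I t z h \<noteq> 0"
    and k: "k \<in> {1..N-1}" and a: "a \<in> {1..lsum lam k}" and c: "c \<in> {1..lsum lam (Suc k)}"
    and ta: "t k a \<noteq> 0"
    and less: "elt (cumset I k) a < elt (cumset I (Suc k)) c"
  shows "(if Suc k = N then z c else t (Suc k) c) \<noteq> t k a"
proof
  assume eq: "(if Suc k = N then z c else t (Suc k) c) = t k a"
  have "U_fun N lam I t z h = 0"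
    unfolding U_fun_def prod_zero_iff[OF finite_atLeastAtMost] mult_eq_0_iff
    using k a c less eq ta
    by (intro bexI[of _ k] bexI[of _ a] disjI1 bexI[of _ c]) (simp_all add: Let_def)
  then show False using U by contradiction
qed

lemma perm_tuples_permutes:
  "p \<in> perm_tuples N lam \<Longrightarrow> k \<in> {1..N-1} \<Longrightarrow> p k permutes {1..lsum lam k}"
  unfolding perm_tuples_def by blast

text \<open>The index j with t^(k)_{p_k(a)} = z_j at the point z_J; at level N the variable
  t^(N)_a of W_{\<sigma>,I} is z_{\<sigma>(a)}.\<close>

definition subst_index ::
    "nat \<Rightarrow> (nat \<Rightarrow> nat) \<Rightarrow> (nat \<Rightarrow> nat set) \<Rightarrow> (nat \<Rightarrow> nat \<Rightarrow> nat) \<Rightarrow> nat \<Rightarrow> nat \<Rightarrow> nat" where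
  "subst_index N \<sigma> J p k a = (if k = N then \<sigma> a else elt (cumset J k) (p k a))"

lemma subst_index_image:
  assumes "(\<Sum>k=1..N. lam k) = n" and \<sigma>: "\<sigma> permutes {1..n}"
    and J: "J \<in> ordered_partitions N n lam" and p: "p \<in> perm_tuples N lam"
    and k: "k \<in> {1..N}"
  shows "subst_index N \<sigma> J p k ` {1..lsum lam k} = cumset J k"
proof (cases "k = N")
  case True
  have "subst_index N \<sigma> J p N ` {1..lsum lam N} = \<sigma> ` {1..n}"
    using assms(1) by (simp add: subst_index_def lsum_def)
  then show ?thesis
    using True permutes_image[OF \<sigma>] cumset_top_ordered_partitions[OF J] by simp
next
  case False
  have "subst_index N \<sigma> J p k ` {1..lsum lam k} = elt (cumset J k) ` p k ` {1..lsum lam k}"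
    using False by (simp add: subst_index_def image_image)
  also have "p k ` {1..lsum lam k} = {1..lsum lam k}"
  proof (rule permutes_image)
    show "p k permutes {1..lsum lam k}"
      using k False by (intro perm_tuples_permutes[OF p]) auto
  qed
  also have "elt (cumset J k) ` {1..lsum lam k} = cumset J k"
    using elt_image[OF finite_cumset_ordered_partitions[OF J], of k]
      card_cumset_ordered_partitions[OF J, of k] k by simp
  finally show ?thesis .
qed

lemma subst_index_dominated:
  assumes sum: "(\<Sum>k=1..N. lam k) = n" and \<sigma>: "\<sigma> permutes {1..n}"
    and I: "I \<in> ordered_partitions N n lam" and J: "J \<in> ordered_partitions N n lam"
    and p: "p \<in> perm_tuples N lam" and nz: "\<forall>i\<in>{1..n}. z i \<noteq> 0"
    and U: "U_fun N lam (\<lambda>k. inv \<sigma> ` I k) (\<lambda>k a. z_at J z k (p k a)) (\<lambda>a. z (\<sigma> a)) h \<noteq> 0"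
    and k: "k \<in> {1..N}" and a: "a \<in> {1..lsum lam k}"
  shows "inv \<sigma> (subst_index N \<sigma> J p k a) \<le> elt (inv \<sigma> ` cumset I k) a"
proof (rule le_by_downward_induction[where A = "\<lambda>k. {1..lsum lam k}"
      and f = "\<lambda>k a. inv \<sigma> (subst_index N \<sigma> J p k a)" and g = "\<lambda>k a. elt (inv \<sigma> ` cumset I k) a"])
  let ?x = "subst_index N \<sigma> J p"
  have image: "?x k ` {1..lsum lam k} = cumset J k" if "k \<in> {1..N}" for k
    using subst_index_image[OF sum \<sigma> J p that] .
  have n: "lsum lam N = n" using sum by (simp add: lsum_def)
  show "inv \<sigma> (?x N a) \<le> elt (inv \<sigma> ` cumset I N) a" if "a \<in> {1..lsum lam N}" for a
    using that n elt_atLeastAtMost[of a n] permutes_image[OF permutes_inv[OF \<sigma>]]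
    by (simp add: subst_index_def permutes_inverses(2)[OF \<sigma>] cumset_top_ordered_partitions[OF I])
  show "\<exists>c\<in>{1..lsum lam (Suc k)}. inv \<sigma> (?x (Suc k) c) = inv \<sigma> (?x k a) \<and>
          elt (inv \<sigma> ` cumset I (Suc k)) c \<le> elt (inv \<sigma> ` cumset I k) a"
    if k: "1 \<le> k" "k < N" and a: "a \<in> {1..lsum lam k}" for k a
  proof -
    have xJ: "?x k a \<in> cumset J k" using image[of k] k a by auto
    then have "?x k a \<in> cumset J (Suc k)" using cumset_mono by blast
    then obtain c where c: "c \<in> {1..lsum lam (Suc k)}" "?x (Suc k) c = ?x k a"
      using image[of "Suc k"] k by (metis Suc_leI atLeastAtMost_iff imageE le_SucI)
    have "z (?x k a) \<noteq> 0"
      using nz cumset_subset_ordered_partitions[OF J] xJ by blast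
    moreover have k': "k \<in> {1..N-1}" using k by auto
    ultimately have "\<not> elt (inv \<sigma> ` cumset I k) a < elt (inv \<sigma> ` cumset I (Suc k)) c"
      using U_fun_nonzero_imp_ne[OF U k' a c(1)] k c(2)
      by (auto simp: cumset_image z_at_def subst_index_def split: if_splits)
    then show ?thesis using c by (intro bexI[of _ c]) auto
  qed
qed (use k a in auto)

lemma leq_sigma_if_U_fun_nonzero:
  assumes sum: "(\<Sum>k=1..N. lam k) = n" and \<sigma>: "\<sigma> permutes {1..n}"
    and I: "I \<in> ordered_partitions N n lam" and J: "J \<in> ordered_partitions N n lam"
    and p: "p \<in> perm_tuples N lam" and nz: "\<forall>i\<in>{1..n}. z i \<noteq> 0"
    and U: "U_fun N lam (\<lambda>k. inv \<sigma> ` I k) (\<lambda>k a. z_at J z k (p k a)) (\<lambda>a. z (\<sigma> a)) h \<noteq> 0"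
  shows "leq_sigma N \<sigma> J I"
  unfolding leq_sigma_def
proof (intro ballI)
  fix k i assume k: "k \<in> {1..N-1}" and i: "i \<in> {1..card (cumset I k)}"
  then have k': "k \<in> {1..N}" by auto
  have inj: "inj_on (inv \<sigma>) X" for X
    using permutes_inj[OF permutes_inv[OF \<sigma>]] by (rule inj_on_subset) simp
  have card: "card (cumset X k) = lsum lam k" if "X \<in> ordered_partitions N n lam" for X
    using card_cumset_ordered_partitions[OF that, of k] k' by simp
  show "elt (inv \<sigma> ` cumset J k) i \<le> elt (inv \<sigma> ` cumset I k) i"
  proof (rule elt_le_elt_if_dominated)
    show "(inv \<sigma> \<circ> subst_index N \<sigma> J p k) ` {1..lsum lam k} = inv \<sigma> ` cumset J k"
      unfolding image_comp[symmetric] using subst_index_image[OF sum \<sigma> J p k'] by simp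
    show "(inv \<sigma> \<circ> subst_index N \<sigma> J p k) a \<le> elt (inv \<sigma> ` cumset I k) a"
      if "a \<in> {1..lsum lam k}" for a
      using subst_index_dominated[OF sum \<sigma> I J p nz U k' that] by simp
  qed (use i I J card inj finite_cumset_ordered_partitions in \<open>auto simp: card_image\<close>)
qed

theorem lemma6p2:
  fixes N n :: nat and lam :: "nat \<Rightarrow> nat" and \<sigma> :: "nat \<Rightarrow> nat"
    and I J :: "nat \<Rightarrow> nat set"
  assumes "N \<ge> 1"
    and "(\<Sum>k=1..N. lam k) = n"
    and "\<sigma> permutes {1..n}"
    and "I \<in> ordered_partitions N n lam"
    and "J \<in> ordered_partitions N n lam"
    and "\<not> leq_sigma N \<sigma> J I"
  shows "\<forall>(z :: nat \<Rightarrow> complex) (h :: complex).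
           inj_on z {1..n} \<longrightarrow> (\<forall>i\<in>{1..n}. z i \<noteq> 0) \<longrightarrow>
           W_tilde N lam \<sigma> I (z_at J z) z h = 0"
proof (intro allI impI)
  fix z :: "nat \<Rightarrow> complex" and h :: complex
  assume nz: "\<forall>i\<in>{1..n}. z i \<noteq> 0"
  have "U_fun N lam (\<lambda>k. inv \<sigma> ` I k) (\<lambda>k a. z_at J z k (p k a)) (\<lambda>a. z (\<sigma> a)) h = 0"
    if "p \<in> perm_tuples N lam" for p
    using leq_sigma_if_U_fun_nonzero[OF assms(2-5) that nz] assms(6) by blast
  then show "W_tilde N lam \<sigma> I (z_at J z) z h = 0"
    by (simp add: W_tilde_def W_sigma_def W_fun_def)
qed

end
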